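(* Let $\mathfrak g$ be a real almost abelian Lie algebra with $\dim\mathfrak g\ge 6$. Then every LCS structure $(\omega,\theta)$ on $\mathfrak g$ is of the second kind.
   Context: An almost abelian Lie algebra is a real Lie algebra with an abelian ideal of codimension one. An LCS structure on $\mathfrak g$ is a pair $(\omega,\theta)$ with $\omega\in\Lambda^2\mathfrak g^*$ non-degenerate and $\theta\in\mathfrak g^*$ closed and nonzero, such that $d\omega=\theta\wedge\omega$. Let $\mathfrak g_\omega=\{x\in\mathfrak g:\ \omega([x,y],z)+\omega(y,[x,z])=0\ \text{for all }y,z\in\mathfrak g\}$ (a Lie subalgebra). The LCS structure is of the first kind if $\theta|_{\mathfrak g_\omega}$ is surjective onto $\mathbb R$, and of the second kind if $\theta|_{\mathfrak g_\omega}\equiv0$. *)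

theory Defs
  imports "HOL-Analysis.Analysis"
begin

definition lie_algebra :: "('a::euclidean_space \<Rightarrow> 'a \<Rightarrow> 'a) \<Rightarrow> bool" where
  "lie_algebra br \<longleftrightarrow> bilinear br \<and> (\<forall>x. br x x = 0) \<and>
     (\<forall>x y z. br x (br y z) + br y (br z x) + br z (br x y) = 0)"

definition almost_abelian :: "('a::euclidean_space \<Rightarrow> 'a \<Rightarrow> 'a) \<Rightarrow> bool" where
  "almost_abelian br \<longleftrightarrow> lie_algebra br \<and>
     (\<exists>h. subspace h \<and> dim h + 1 = DIM('a) \<and>
          (\<forall>x\<in>h. \<forall>y. br x y \<in> h) \<and> (\<forall>x\<in>h. \<forall>y\<in>h. br x y = 0))"

definition d1 :: "('a \<Rightarrow> 'a \<Rightarrow> 'a) \<Rightarrow> ('a \<Rightarrow> real) \<Rightarrow> 'a \<Rightarrow> 'a \<Rightarrow> real" where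
  "d1 br \<theta> x y = - \<theta> (br x y)"

definition d2 :: "('a \<Rightarrow> 'a \<Rightarrow> 'a) \<Rightarrow> ('a \<Rightarrow> 'a \<Rightarrow> real) \<Rightarrow> 'a \<Rightarrow> 'a \<Rightarrow> 'a \<Rightarrow> real" where
  "d2 br \<omega> x y z = - \<omega> (br x y) z + \<omega> (br x z) y - \<omega> (br y z) x"

definition wedge12 :: "('a \<Rightarrow> real) \<Rightarrow> ('a \<Rightarrow> 'a \<Rightarrow> real) \<Rightarrow> 'a \<Rightarrow> 'a \<Rightarrow> 'a \<Rightarrow> real" where
  "wedge12 \<theta> \<omega> x y z = \<theta> x * \<omega> y z - \<theta> y * \<omega> x z + \<theta> z * \<omega> x y"

definition two_form :: "('a::real_vector \<Rightarrow> 'a \<Rightarrow> real) \<Rightarrow> bool" where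
  "two_form \<omega> \<longleftrightarrow> bilinear \<omega> \<and> (\<forall>x. \<omega> x x = 0)"

definition nondegenerate :: "('a::real_vector \<Rightarrow> 'a \<Rightarrow> real) \<Rightarrow> bool" where
  "nondegenerate \<omega> \<longleftrightarrow> (\<forall>x. (\<forall>y. \<omega> x y = 0) \<longrightarrow> x = 0)"

definition LCS :: "('a::euclidean_space \<Rightarrow> 'a \<Rightarrow> 'a) \<Rightarrow> ('a \<Rightarrow> 'a \<Rightarrow> real) \<Rightarrow> ('a \<Rightarrow> real) \<Rightarrow> bool" where
  "LCS br \<omega> \<theta> \<longleftrightarrow> two_form \<omega> \<and> nondegenerate \<omega> \<and>
     linear \<theta> \<and> d1 br \<theta> = (\<lambda>x y. 0) \<and> \<theta> \<noteq> (\<lambda>x. 0) \<and>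
     d2 br \<omega> = wedge12 \<theta> \<omega>"

definition g_omega :: "('a \<Rightarrow> 'a \<Rightarrow> 'a) \<Rightarrow> ('a \<Rightarrow> 'a \<Rightarrow> real) \<Rightarrow> 'a set" where
  "g_omega br \<omega> = {x. \<forall>y z. \<omega> (br x y) z + \<omega> y (br x z) = 0}"

definition LCS_first_kind :: "('a \<Rightarrow> 'a \<Rightarrow> 'a) \<Rightarrow> ('a \<Rightarrow> 'a \<Rightarrow> real) \<Rightarrow> ('a \<Rightarrow> real) \<Rightarrow> bool" where
  "LCS_first_kind br \<omega> \<theta> \<longleftrightarrow> \<theta> ` g_omega br \<omega> = UNIV"

definition LCS_second_kind :: "('a \<Rightarrow> 'a \<Rightarrow> 'a) \<Rightarrow> ('a \<Rightarrow> 'a \<Rightarrow> real) \<Rightarrow> ('a \<Rightarrow> real) \<Rightarrow> bool" where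
  "LCS_second_kind br \<omega> \<theta> \<longleftrightarrow> (\<forall>x\<in>g_omega br \<omega>. \<theta> x = 0)"

end

theory Submission
  imports Defs
begin

text \<open>Suppose \<open>\<theta> x \<noteq> 0\<close> for some \<open>x \<in> g_omega br \<omega>\<close> and let \<open>h\<close> be the abelian ideal
  of codimension one. For \<open>y, z \<in> h\<close> the invariance of \<open>\<omega>\<close> under \<open>x\<close> kills
  \<open>d\<omega>(x,y,z)\<close>, so \<open>\<theta>(x) \<omega>(y,z) = \<theta>(y) \<omega>(x,z) - \<theta>(z) \<omega>(x,y)\<close>. Since
  \<open>dim h \<ge> 5 > 3\<close>, some nonzero \<open>y \<in> h\<close> satisfies \<open>\<theta>(y) = \<omega>(x,y) = \<omega>(e,y) = 0\<close> for a
  fixed \<open>e \<notin> h\<close>. Then \<open>\<omega>(y,-)\<close> vanishes on \<open>h\<close> and on \<open>e\<close>, hence everywhere,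
  contradicting nondegeneracy.\<close>

lemma two_form_skew:
  assumes "two_form \<omega>"
  shows "\<omega> u v = - \<omega> v u"
proof -
  have lin2: "linear (\<omega> w)" and lin1: "linear (\<lambda>w. \<omega> w v')" for w v'
    using assms unfolding two_form_def bilinear_def by auto
  have "0 = \<omega> (u + v) (u + v)"
    using assms unfolding two_form_def by simp
  also have "\<dots> = \<omega> u u + \<omega> u v + \<omega> v u + \<omega> v v"
    using linear_add[OF lin2] linear_add[OF lin1] by simp
  also have "\<dots> = \<omega> u v + \<omega> v u"
    using assms unfolding two_form_def by simp
  finally show ?thesis by simp
qed

lemma d2_g_omega_commuting:
  assumes "two_form \<omega>" and "x \<in> g_omega br \<omega>" and "br y z = 0"
  shows "d2 br \<omega> x y z = 0"
proof -
  have "\<omega> 0 x = 0"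
    using assms(1) linear_0[of "\<lambda>w. \<omega> w x"] unfolding two_form_def bilinear_def by simp
  moreover have "\<omega> (br x y) z + \<omega> y (br x z) = 0"
    using assms(2) unfolding g_omega_def by blast
  ultimately show ?thesis
    unfolding d2_def using assms(3) two_form_skew[OF assms(1), of "br x z" y] by simp
qed

lemma common_kernel_in_subspace:
  fixes h :: "'a::euclidean_space set" and F :: "('a \<Rightarrow> real) set"
  assumes h: "subspace h" and F: "finite F" "card F < dim h" "\<forall>f\<in>F. linear f"
  shows "\<exists>y\<in>h. y \<noteq> 0 \<and> (\<forall>f\<in>F. f y = 0)"
proof -
  define A where "A = span ((\<lambda>f. adjoint f 1) ` F)"
  define T where "T = {y. \<forall>a\<in>A. orthogonal a y}"
  have rep: "f y = adjoint f 1 \<bullet> y" if "f \<in> F" for f y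
    using adjoint_works[of f y 1] F(3) that by (simp add: inner_commute)
  have "dim {y \<in> UNIV. \<forall>a\<in>A. orthogonal a y} + dim A = dim (UNIV :: 'a set)"
    by (rule dim_subspace_orthogonal_to_vectors) (auto simp: A_def)
  then have dim_T: "dim T + dim A = DIM('a)"
    unfolding T_def by simp
  have "dim A \<le> card ((\<lambda>f. adjoint f 1) ` F)"
    unfolding A_def dim_span by (rule dim_le_card') (simp add: F(1))
  also have "\<dots> \<le> card F"
    by (rule card_image_le[OF F(1)])
  moreover have "dim {u + v |u v. u \<in> h \<and> v \<in> T} + dim (h \<inter> T) = dim h + dim T"
    by (rule dim_sums_Int[OF h]) (simp add: T_def subspace_orthogonal_to_vectors)
  moreover have "dim {u + v |u v. u \<in> h \<and> v \<in> T} \<le> DIM('a)"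
    by (rule dim_subset_UNIV)
  ultimately have "dim (h \<inter> T) \<noteq> 0"
    using dim_T F(2) by linarith
  then obtain y where y: "y \<in> h \<inter> T" "y \<noteq> 0"
    by (metis dim_eq_0 singletonI subsetI)
  have "f y = 0" if "f \<in> F" for f
  proof -
    have "adjoint f 1 \<in> A"
      using that unfolding A_def by (simp add: span_base)
    then show ?thesis
      using y(1) rep[OF that] unfolding T_def orthogonal_def by simp
  qed
  then show ?thesis
    using y by blast
qed

lemma span_insert_hyperplane:
  fixes h :: "'a::euclidean_space set"
  assumes "subspace h" and "dim h + 1 = DIM('a)" and "e \<notin> h"
  shows "span (insert e h) = UNIV"
proof -
  have "e \<notin> span h"
    using assms(1,3) by (metis span_eq_iff)
  then have "dim (insert e h) = DIM('a)"
    using assms(2) by (simp add: dim_insert)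
  then show ?thesis
    by (metis dim_eq_full)
qed

lemma nondegenerate_vanishing_on_hyperplane:
  fixes \<omega> :: "'a::euclidean_space \<Rightarrow> 'a \<Rightarrow> real"
  assumes "two_form \<omega>" "nondegenerate \<omega>"
    and "subspace h" "dim h + 1 = DIM('a)" "e \<notin> h"
    and "\<forall>w\<in>h. \<omega> y w = 0" "\<omega> y e = 0"
  shows "y = 0"
proof -
  have "linear (\<omega> y)"
    using assms(1) unfolding two_form_def bilinear_def by auto
  then have "\<omega> y w = 0" for w
    using linear_eq_0_on_span assms(6,7) span_insert_hyperplane[OF assms(3-5)] by blast
  then show ?thesis
    using assms(2) unfolding nondegenerate_def by blast
qed

lemma LCS_g_omega_annihilates_ideal:
  assumes "LCS br \<omega> \<theta>" and "x \<in> g_omega br \<omega>" and "\<theta> x \<noteq> 0"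
    and "br y z = 0" and "\<theta> y = 0" and "\<omega> x y = 0"
  shows "\<omega> y z = 0"
proof -
  have "two_form \<omega>" and "d2 br \<omega> = wedge12 \<theta> \<omega>"
    using assms(1) unfolding LCS_def by auto
  then have "\<theta> x * \<omega> y z - \<theta> y * \<omega> x z + \<theta> z * \<omega> x y = 0"
    using d2_g_omega_commuting[OF _ assms(2,4)] unfolding wedge12_def by metis
  then show ?thesis
    using assms(3,5,6) by simp
qed

theorem corollary4p3:
  fixes br :: "'a::euclidean_space \<Rightarrow> 'a \<Rightarrow> 'a"
    and \<omega> :: "'a \<Rightarrow> 'a \<Rightarrow> real" and \<theta> :: "'a \<Rightarrow> real"
  assumes "almost_abelian br"
    and "DIM('a) \<ge> 6"
    and "LCS br \<omega> \<theta>"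
  shows "LCS_second_kind br \<omega> \<theta>"
  unfolding LCS_second_kind_def
proof (rule ballI, rule ccontr)
  fix x assume x: "x \<in> g_omega br \<omega>" "\<theta> x \<noteq> 0"
  obtain h where h: "subspace h" "dim h + 1 = DIM('a)" "\<forall>u\<in>h. \<forall>v\<in>h. br u v = 0"
    using assms(1) unfolding almost_abelian_def by blast
  have "h \<noteq> UNIV"
    using h(2) by (metis dim_UNIV add_cancel_left_right one_neq_zero)
  then obtain e where e: "e \<notin> h"
    by blast
  have \<omega>: "two_form \<omega>" "nondegenerate \<omega>" and "linear \<theta>"
    using assms(3) unfolding LCS_def by auto
  then have lin: "\<forall>f\<in>{\<theta>, \<omega> x, \<omega> e}. linear f"
    unfolding two_form_def bilinear_def by auto
  have "card {\<theta>, \<omega> x, \<omega> e} \<le> 3"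
    by (simp add: card_insert_le_m1)
  then have "card {\<theta>, \<omega> x, \<omega> e} < dim h"
    using h(2) assms(2) by linarith
  then obtain y where y: "y \<in> h" "y \<noteq> 0" "\<forall>f\<in>{\<theta>, \<omega> x, \<omega> e}. f y = 0"
    using common_kernel_in_subspace[OF h(1) _ _ lin] by blast
  then have y_ker: "\<theta> y = 0" "\<omega> x y = 0" "\<omega> e y = 0"
    by auto
  have "\<forall>w\<in>h. \<omega> y w = 0"
    using y(1) h(3) LCS_g_omega_annihilates_ideal[OF assms(3) x _ y_ker(1,2)] by blast
  moreover have "\<omega> y e = 0"
    using y_ker(3) two_form_skew[OF \<omega>(1), of y e] by simp
  ultimately show False
    using nondegenerate_vanishing_on_hyperplane[OF \<omega> h(1,2) e] y(2) by blast
qed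

end
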